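(* For a parameter vector $p=(b,\beta,\beta_1,\gamma,\varepsilon_1,\varepsilon_2,\lambda,\alpha)$ consider the planar system $$s'=b+\gamma+(\varepsilon_2-b-\beta-\gamma)s-\gamma i-\varepsilon_2 s^2+(\varepsilon_1-\varepsilon_2-\lambda)is,$$ $$i'=\beta_1 s+(\varepsilon_2-\varepsilon_1-\alpha-b)i+(\lambda-\varepsilon_2)is+(\varepsilon_1-\varepsilon_2)i^2$$ on $D_1=\{(s,i): s\ge0,\ i\ge0,\ s+i\le1\}$. Let $\Omega\subset\mathbb{R}^8_+$ be the open set of admissible parameter values (all parameters positive and $\beta_2=\beta-\beta_1>0$), and let $\Omega_1\subset\Omega$ be the set of parameter values for which this system has a nonhyperbolic rest point in $D_1$. Then $\Omega_1$ is a closed, nonempty subset of $\Omega$ of Lebesgue measure zero.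
   Context: A rest point is hyperbolic if all eigenvalues of the linearization there have nonzero real parts. The system is the reduction, via $r=1-s-i$, of the SIRS proportions system with birth rate $b$, disease transfer rate $\beta=\beta_1+\beta_2$, recovery rate $\gamma$, excess death rates $\varepsilon_1,\varepsilon_2$, contact rate $\lambda$ and removal rate $\alpha$. *)

theory Defs
  imports "HOL-Analysis.Analysis"
begin

text \<open>Parameter vector p = (b, beta, beta1, gamma, eps1, eps2, lambda, alpha) in R^8,
  indexed p$1 ... p$8 in this order. State vector x = (s, i) in R^2, x$1 = s, x$2 = i.\<close>

definition sirs_field :: "real^8 \<Rightarrow> real^2 \<Rightarrow> real^2" where
  "sirs_field p x =
    (let b = p$1; \<beta> = p$2; \<beta>\<^sub>1 = p$3; \<gamma> = p$4; \<epsilon>\<^sub>1 = p$5; \<epsilon>\<^sub>2 = p$6; lam = p$7; \<alpha> = p$8;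
         s = x$1; i = x$2
     in (\<chi> k. if k = 1 then
                b + \<gamma> + (\<epsilon>\<^sub>2 - b - \<beta> - \<gamma>) * s - \<gamma> * i - \<epsilon>\<^sub>2 * s^2 + (\<epsilon>\<^sub>1 - \<epsilon>\<^sub>2 - lam) * i * s
              else
                \<beta>\<^sub>1 * s + (\<epsilon>\<^sub>2 - \<epsilon>\<^sub>1 - \<alpha> - b) * i + (lam - \<epsilon>\<^sub>2) * i * s + (\<epsilon>\<^sub>1 - \<epsilon>\<^sub>2) * i^2))"

definition D1 :: "(real^2) set" where
  "D1 = {x. x$1 \<ge> 0 \<and> x$2 \<ge> 0 \<and> x$1 + x$2 \<le> 1}"

definition Omega :: "(real^8) set" where
  "Omega = {p. (\<forall>k. p$k > 0) \<and> p$2 - p$3 > 0}"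

definition is_eigenvalue :: "real^'n^'n \<Rightarrow> complex \<Rightarrow> bool" where
  "is_eigenvalue J \<mu> \<longleftrightarrow>
     (\<exists>v :: complex^'n. v \<noteq> 0 \<and> (\<chi> i j. complex_of_real (J$i$j)) *v v = \<mu> *s v)"

definition nonhyperbolic_rest_point :: "(real^'n \<Rightarrow> real^'n) \<Rightarrow> real^'n \<Rightarrow> bool" where
  "nonhyperbolic_rest_point F x \<longleftrightarrow>
     F x = 0 \<and> (\<exists>J :: real^'n^'n. (F has_derivative (\<lambda>h. J *v h)) (at x) \<and>
                               (\<exists>\<mu>. is_eigenvalue J \<mu> \<and> Re \<mu> = 0))"

definition Omega1 :: "(real^8) set" where
  "Omega1 = {p \<in> Omega. \<exists>x \<in> D1. nonhyperbolic_rest_point (sirs_field p) x}"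

end

theory Submission
  imports Defs
begin

(* At a rest point in D1 of admissible parameters s > 0 holds, so the two rest-point equations
   can be solved for beta and beta1: the parameter vector is the image of the remaining data
   u = (b, s, i, gamma, eps1, eps2, lambda, alpha) under a map that is smooth on s \<noteq> 0.
   A real 2x2 matrix has an eigenvalue on the imaginary axis iff det J = 0 or (tr J = 0 and det J \<ge> 0).
   Written in u, tr J is affine in alpha with slope -1, and s * det J is affine in alpha with a slope
   that is itself affine in b with slope 1; hence the nonhyperbolic set in u-space is covered by three
   graphs over coordinate hyperplanes, which are null, and so is its smooth image Omega1.
   Closedness: Omega1 is Omega intersected with the projection, along the compact D1, of a closed set. *)

definition vec_upd :: "'a^'n \<Rightarrow> 'n \<Rightarrow> 'a \<Rightarrow> 'a^'n" where
  "vec_upd u k t = (\<chi> j. if j = k then t else u $ j)"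

lemma vec_upd_nth [simp]: "vec_upd u k t $ j = (if j = k then t else u $ j)"
  by (simp add: vec_upd_def)

lemma vec_upd_upd_same [simp]: "vec_upd (vec_upd u k s) k t = vec_upd u k t"
  by (simp add: vec_eq_iff)

lemma has_derivative_vec_nth: "((\<lambda>x. x $ k) has_derivative (\<lambda>h. h $ k)) F"
  by (rule bounded_linear_imp_has_derivative) (rule bounded_linear_vec_nth)

lemma has_derivative_componentwise_cart:
  fixes f :: "'a::real_normed_vector \<Rightarrow> real^'n"
  shows "(f has_derivative f') (at a within S) \<longleftrightarrow>
    (\<forall>k. ((\<lambda>x. f x $ k) has_derivative (\<lambda>h. f' h $ k)) (at a within S))"
  by (subst has_derivative_componentwise_within) (simp add: Basis_vec_def cart_eq_inner_axis [symmetric])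

lemma differentiable_componentwise_cart:
  fixes f :: "'a::euclidean_space \<Rightarrow> real^'n"
  shows "f differentiable (at a within S) \<longleftrightarrow> (\<forall>k. (\<lambda>x. f x $ k) differentiable (at a within S))"
  by (subst differentiable_componentwise_within) (simp add: Basis_vec_def cart_eq_inner_axis [symmetric])

lemma differentiable_vec_upd:
  fixes f :: "real^'n \<Rightarrow> real"
  assumes "f differentiable (at a within S)"
  shows "(\<lambda>u. vec_upd u k (f u)) differentiable (at a within S)"
  unfolding differentiable_componentwise_cart vec_upd_nth
proof
  fix j
  show "(\<lambda>u. if j = k then f u else u $ j) differentiable (at a within S)"
    using assms by (cases "j = k") (auto intro: bounded_linear_imp_differentiable)
qed

lemma negligible_graph_cart:
  fixes \<phi> :: "real^'n \<Rightarrow> real"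
  assumes indep: "\<And>u t. \<phi> (vec_upd u k t) = \<phi> u"
    and cylinder: "\<And>u t. u \<in> S \<Longrightarrow> vec_upd u k t \<in> S"
    and diff: "\<And>u. u \<in> S \<Longrightarrow> \<phi> differentiable (at u)"
  shows "negligible {u \<in> S. u $ k = \<phi> u}"
proof -
  define H where "H = {u \<in> S. u $ k = 0}"
  define g where "g u = vec_upd u k (\<phi> u)" for u
  have "negligible (g ` H)"
  proof (rule negligible_differentiable_image_negligible [OF order_refl])
    show "negligible H"
      by (rule negligible_subset [OF negligible_standard_hyperplane_cart [of k]]) (auto simp: H_def)
    show "g differentiable_on H"
      unfolding differentiable_on_def g_def
      by (auto simp: H_def intro: differentiable_vec_upd differentiable_at_withinI diff)
  qed
  moreover have "{u \<in> S. u $ k = \<phi> u} \<subseteq> g ` H"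
  proof
    fix u
    assume u: "u \<in> {u \<in> S. u $ k = \<phi> u}"
    then have "u = g (vec_upd u k 0)"
      by (simp add: g_def indep vec_eq_iff)
    moreover have "vec_upd u k 0 \<in> H"
      using u cylinder by (simp add: H_def)
    ultimately show "u \<in> g ` H" by blast
  qed
  ultimately show ?thesis
    by (rule negligible_subset)
qed

lemma is_eigenvalue_iff_det:
  fixes J :: "real^'n^'n"
  shows "is_eigenvalue J \<mu> \<longleftrightarrow> det ((\<chi> i j. complex_of_real (J$i$j)) - mat \<mu>) = 0"
proof -
  let ?A = "(\<chi> i j. complex_of_real (J$i$j)) - mat \<mu>"
  have "mat \<mu> *v v = \<mu> *s v" for v :: "complex^'n"
    by (simp add: vec_eq_iff matrix_vector_mult_def mat_def if_distrib if_distribR cong del: if_weak_cong)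
  then have "is_eigenvalue J \<mu> \<longleftrightarrow> (\<exists>v. v \<noteq> 0 \<and> ?A *v v = 0)"
    by (simp add: is_eigenvalue_def matrix_vector_mult_diff_rdistrib)
  also have "\<dots> \<longleftrightarrow> det ?A = 0"
    by (metis invertible_det_nz invertible_left_inverse matrix_left_invertible_ker)
  finally show ?thesis .
qed

lemma det_minus_mat_2:
  fixes A :: "'a::comm_ring_1^2^2"
  shows "det (A - mat \<mu>) = \<mu>^2 - trace A * \<mu> + det A"
  by (simp add: det_2 trace_def sum_2 mat_def algebra_simps power2_eq_square)

lemma is_eigenvalue_2x2_iff:
  fixes J :: "real^2^2"
  shows "is_eigenvalue J \<mu> \<longleftrightarrow> \<mu>^2 - of_real (trace J) * \<mu> + of_real (det J) = 0"
  unfolding is_eigenvalue_iff_det det_minus_mat_2 by (simp add: det_2 trace_def sum_2)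

lemma imaginary_eigenvalue_2x2_iff:
  fixes J :: "real^2^2"
  shows "(\<exists>\<mu>. is_eigenvalue J \<mu> \<and> Re \<mu> = 0) \<longleftrightarrow> det J = 0 \<or> (trace J = 0 \<and> det J \<ge> 0)"
proof -
  have imag: "is_eigenvalue J (\<i> * of_real w) \<longleftrightarrow> det J = w^2 \<and> w * trace J = 0" for w
    by (simp add: is_eigenvalue_2x2_iff complex_eq_iff power2_eq_square) blast
  show ?thesis
  proof
    assume "\<exists>\<mu>. is_eigenvalue J \<mu> \<and> Re \<mu> = 0"
    then obtain \<mu> where "is_eigenvalue J \<mu>" "\<mu> = \<i> * of_real (Im \<mu>)"
      by (auto simp: complex_eq_iff)
    then show "det J = 0 \<or> (trace J = 0 \<and> det J \<ge> 0)"
      by (metis imag mult_eq_0_iff power2_eq_square zero_le_square)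
  next
    assume "det J = 0 \<or> (trace J = 0 \<and> det J \<ge> 0)"
    then have "is_eigenvalue J (\<i> * of_real (sqrt (det J)))"
      unfolding imag by auto
    then show "\<exists>\<mu>. is_eigenvalue J \<mu> \<and> Re \<mu> = 0"
      by fastforce
  qed
qed

lemma nonhyperbolic_rest_point_iff:
  fixes F :: "real^'n \<Rightarrow> real^'n"
  assumes "(F has_derivative (\<lambda>h. J *v h)) (at x)"
  shows "nonhyperbolic_rest_point F x \<longleftrightarrow> F x = 0 \<and> (\<exists>\<mu>. is_eigenvalue J \<mu> \<and> Re \<mu> = 0)"
proof -
  have "(F has_derivative (\<lambda>h. J' *v h)) (at x) \<longleftrightarrow> J' = J" for J'
    by (metis assms has_derivative_unique matrix_of_matrix_vector_mul)
  then show ?thesis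
    unfolding nonhyperbolic_rest_point_def by simp
qed

lemma sirs_field_nth:
  "sirs_field p x $ 1 = p$1 + p$4 + (p$6 - p$1 - p$2 - p$4) * x$1 - p$4 * x$2 - p$6 * (x$1)^2
     + (p$5 - p$6 - p$7) * x$2 * x$1"
  "sirs_field p x $ 2 = p$3 * x$1 + (p$6 - p$5 - p$8 - p$1) * x$2 + (p$7 - p$6) * x$2 * x$1
     + (p$5 - p$6) * (x$2)^2"
  by (simp_all add: sirs_field_def Let_def)

definition sirs_jacobian :: "real^8 \<Rightarrow> real^2 \<Rightarrow> real^2^2" where
  "sirs_jacobian p x =
    (let b = p$1; \<beta> = p$2; \<beta>\<^sub>1 = p$3; \<gamma> = p$4; \<epsilon>\<^sub>1 = p$5; \<epsilon>\<^sub>2 = p$6; lam = p$7; \<alpha> = p$8;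
         s = x$1; i = x$2
     in (\<chi> r c. if r = 1 then
                  (if c = 1 then \<epsilon>\<^sub>2 - b - \<beta> - \<gamma> - 2 * \<epsilon>\<^sub>2 * s + (\<epsilon>\<^sub>1 - \<epsilon>\<^sub>2 - lam) * i
                   else - \<gamma> + (\<epsilon>\<^sub>1 - \<epsilon>\<^sub>2 - lam) * s)
                else
                  (if c = 1 then \<beta>\<^sub>1 + (lam - \<epsilon>\<^sub>2) * i
                   else \<epsilon>\<^sub>2 - \<epsilon>\<^sub>1 - \<alpha> - b + (lam - \<epsilon>\<^sub>2) * s + 2 * (\<epsilon>\<^sub>1 - \<epsilon>\<^sub>2) * i)))"

lemma has_derivative_sirs_field:
  "(sirs_field p has_derivative (\<lambda>h. sirs_jacobian p x *v h)) (at x)"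
  unfolding has_derivative_componentwise_cart
proof
  fix k :: 2
  consider "k = 1" | "k = 2"
    using exhaust_2 by blast
  then show "((\<lambda>y. sirs_field p y $ k) has_derivative (\<lambda>h. (sirs_jacobian p x *v h) $ k)) (at x)"
  proof cases
    case 1
    show ?thesis
      unfolding 1 sirs_field_nth
      by (rule derivative_eq_intros has_derivative_vec_nth refl)+
         (simp add: sirs_jacobian_def Let_def matrix_vector_mult_def sum_2 algebra_simps power2_eq_square)
  next
    case 2
    show ?thesis
      unfolding 2 sirs_field_nth
      by (rule derivative_eq_intros has_derivative_vec_nth refl)+
         (simp add: sirs_jacobian_def Let_def matrix_vector_mult_def sum_2 algebra_simps power2_eq_square)
  qed
qed

lemma nonhyperbolic_rest_point_sirs_iff:
  "nonhyperbolic_rest_point (sirs_field p) x \<longleftrightarrow>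
     sirs_field p x = 0 \<and>
     (det (sirs_jacobian p x) = 0 \<or> (trace (sirs_jacobian p x) = 0 \<and> det (sirs_jacobian p x) \<ge> 0))"
  by (simp add: nonhyperbolic_rest_point_iff [OF has_derivative_sirs_field] imaginary_eigenvalue_2x2_iff)

lemma compact_D1: "compact D1"
proof -
  have "closed D1"
    unfolding D1_def by (intro closed_Collect_conj closed_Collect_le continuous_intros)
  moreover have "bounded D1"
    by (rule bounded_subset [OF bounded_cbox [of 0 1]]) (auto simp: D1_def mem_box_cart forall_2)
  ultimately show ?thesis
    by (simp add: compact_eq_bounded_closed)
qed

lemma closedin_Omega1: "closedin (top_of_set Omega) Omega1"
proof -
  define T where "T = {z. sirs_field (snd z) (fst z) = 0 \<and>
     (det (sirs_jacobian (snd z) (fst z)) = 0 \<or>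
      (trace (sirs_jacobian (snd z) (fst z)) = 0 \<and> det (sirs_jacobian (snd z) (fst z)) \<ge> 0))}"
  have "closed T"
    unfolding T_def vec_eq_iff forall_2 zero_index sirs_field_nth det_2 trace_def sum_2
    by (simp add: sirs_jacobian_def Let_def)
       (intro closed_Collect_conj closed_Collect_disj closed_Collect_eq closed_Collect_le continuous_intros)
  then have "closedin (top_of_set Omega) (Omega \<inter> {p. \<exists>x. x \<in> D1 \<and> (x, p) \<in> T})"
    by (intro closedin_closed_Int closed_compact_projection compact_D1)
  moreover have "Omega1 = Omega \<inter> {p. \<exists>x. x \<in> D1 \<and> (x, p) \<in> T}"
    unfolding Omega1_def T_def nonhyperbolic_rest_point_sirs_iff by auto
  ultimately show ?thesis
    by simp
qed

(* Chart coordinates u = (b, s, i, gamma, eps1, eps2, lambda, alpha): the slots of beta and beta1 carry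
   the rest point (s, i), and sirs_chart fills them with the values of beta and beta1 obtained by
   solving the two rest-point equations, which are linear in them. *)
definition sirs_chart :: "real^8 \<Rightarrow> real^8" where
  "sirs_chart u =
    (let b = u$1; s = u$2; i = u$3; \<gamma> = u$4; \<epsilon>\<^sub>1 = u$5; \<epsilon>\<^sub>2 = u$6; lam = u$7; \<alpha> = u$8
     in (\<chi> k. if k = 2 then
                (b * (1 - s) + \<gamma> * (1 - s - i) + \<epsilon>\<^sub>2 * s * (1 - s) + (\<epsilon>\<^sub>1 - \<epsilon>\<^sub>2 - lam) * i * s) / s
              else if k = 3 then
                ((\<epsilon>\<^sub>1 + \<alpha> + b - \<epsilon>\<^sub>2) * i - (lam - \<epsilon>\<^sub>2) * i * s - (\<epsilon>\<^sub>1 - \<epsilon>\<^sub>2) * i^2) / s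
              else u $ k))"

definition chart_state :: "real^8 \<Rightarrow> real^2" where
  "chart_state u = (\<chi> k. if k = 1 then u$2 else u$3)"

definition chart_jacobian :: "real^8 \<Rightarrow> real^2^2" where
  "chart_jacobian u = sirs_jacobian (sirs_chart u) (chart_state u)"

lemma rest_point_in_chart:
  assumes "p \<in> Omega" "x \<in> D1" "sirs_field p x = 0"
  defines "u \<equiv> vec_upd (vec_upd p 2 (x$1)) 3 (x$2)"
  shows "u $ 2 \<noteq> 0" "sirs_chart u = p" "chart_state u = x"
proof -
  have pos: "p$1 > 0" "p$4 > 0"
    using assms(1) by (auto simp: Omega_def)
  have x: "x$1 \<ge> 0" "x$2 \<ge> 0" "x$1 + x$2 \<le> 1"
    using assms(2) by (auto simp: D1_def)
  have F1: "sirs_field p x $ 1 = 0" and F2: "sirs_field p x $ 2 = 0"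
    using assms(3) by simp_all
  have "x$1 \<noteq> 0"
  proof
    assume "x$1 = 0"
    then have "p$1 + p$4 * (1 - x$2) = 0"
      using F1 by (simp add: sirs_field_nth algebra_simps)
    moreover have "p$4 * (1 - x$2) \<ge> 0"
      using pos x \<open>x$1 = 0\<close> by simp
    ultimately show False
      using pos by linarith
  qed
  then show "u $ 2 \<noteq> 0"
    by (simp add: u_def)
  have "sirs_chart u $ k = p $ k" for k
    using F1 F2 \<open>x$1 \<noteq> 0\<close>
    by (cases "k = 2"; cases "k = 3")
       (simp_all add: sirs_chart_def u_def Let_def sirs_field_nth field_simps power2_eq_square)
  then show "sirs_chart u = p"
    by (simp add: vec_eq_iff)
  show "chart_state u = x"
    by (simp add: chart_state_def u_def vec_eq_iff forall_2)
qed

definition det_slope :: "real^8 \<Rightarrow> real" where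
  "det_slope u = u$1 + u$4 + u$6 * (u$2)^2 - (u$5 - u$6 - u$7) * u$2 * u$3"

lemma trace_chart_jacobian:
  assumes "u $ 2 \<noteq> 0"
  shows "trace (chart_jacobian u) = trace (chart_jacobian (vec_upd u 8 0)) - u $ 8"
  using assms
  by (simp add: chart_jacobian_def sirs_jacobian_def sirs_chart_def chart_state_def Let_def trace_def sum_2)

lemma det_chart_jacobian:
  assumes "u $ 2 \<noteq> 0"
  shows "u $ 2 * det (chart_jacobian u) = u $ 2 * det (chart_jacobian (vec_upd u 8 0)) + u $ 8 * det_slope u"
  using assms
  by (simp add: chart_jacobian_def sirs_jacobian_def sirs_chart_def chart_state_def det_slope_def
      Let_def det_2 field_simps power2_eq_square)

lemma differentiable_chart_jacobian:
  assumes "u $ 2 \<noteq> 0"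
  shows "(\<lambda>u. chart_jacobian u $ r $ c) differentiable (at u)"
  using assms
  by (cases "r = 1"; cases "c = 1";
      simp add: chart_jacobian_def sirs_jacobian_def sirs_chart_def chart_state_def Let_def;
      auto intro!: derivative_intros bounded_linear_imp_differentiable [OF bounded_linear_vec_nth])

lemma chart_nonhyperbolic_cases:
  assumes s: "u $ 2 \<noteq> 0" and J: "trace (chart_jacobian u) = 0 \<or> det (chart_jacobian u) = 0"
  shows "u $ 8 = trace (chart_jacobian (vec_upd u 8 0)) \<or>
    (det_slope u \<noteq> 0 \<and> u $ 8 = - u $ 2 * det (chart_jacobian (vec_upd u 8 0)) / det_slope u) \<or>
    det_slope u = 0"
proof -
  consider "trace (chart_jacobian u) = 0" | "det (chart_jacobian u) = 0" "det_slope u \<noteq> 0"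
    | "det_slope u = 0"
    using J by blast
  then show ?thesis
  proof cases
    case 1
    then show ?thesis using trace_chart_jacobian [OF s] by simp
  next
    case 2
    then show ?thesis using det_chart_jacobian [OF s] s by (simp add: field_simps)
  qed simp
qed

lemma negligible_chart_nonhyperbolic:
  "negligible {u. u $ 2 \<noteq> 0 \<and> (trace (chart_jacobian u) = 0 \<or> det (chart_jacobian u) = 0)}"
proof -
  define tr0 where "tr0 u = trace (chart_jacobian (vec_upd u 8 0))" for u
  define det0 where "det0 u = det (chart_jacobian (vec_upd u 8 0))" for u
  have upd0: "tr0 (vec_upd u 8 t) = tr0 u" "det0 (vec_upd u 8 t) = det0 u" for u t
    by (simp_all add: tr0_def det0_def)
  have "(\<lambda>u. chart_jacobian (vec_upd u 8 0) $ r $ c) differentiable (at u)" if "u $ 2 \<noteq> 0" for u r c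
  proof -
    have upd: "(\<lambda>u. vec_upd u 8 0) differentiable (at u)"
      by (intro differentiable_vec_upd differentiable_const)
    have "(\<lambda>v. chart_jacobian v $ r $ c) differentiable (at (vec_upd u 8 0))"
      using that by (intro differentiable_chart_jacobian) simp
    from differentiable_chain_at [OF upd this] show ?thesis
      by (simp add: o_def)
  qed
  then have diff0: "tr0 differentiable (at u)" "det0 differentiable (at u)" if "u $ 2 \<noteq> 0" for u
    unfolding tr0_def det0_def trace_def sum_2 det_2 using that by (auto intro!: derivative_intros)
  have "negligible {u \<in> {u. u $ 2 \<noteq> 0}. u $ 8 = tr0 u}"
    by (rule negligible_graph_cart) (auto simp: upd0 diff0)
  moreover have "negligible {u \<in> {u. u $ 2 \<noteq> 0 \<and> det_slope u \<noteq> 0}. u $ 8 = - u $ 2 * det0 u / det_slope u}"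
    by (rule negligible_graph_cart)
       (auto simp: upd0 det_slope_def
             intro!: derivative_intros diff0 bounded_linear_imp_differentiable [OF bounded_linear_vec_nth])
  moreover have "negligible {u \<in> UNIV. u $ 1 = u $ 1 - det_slope u}"
    by (rule negligible_graph_cart)
       (auto simp: det_slope_def intro!: derivative_intros bounded_linear_imp_differentiable [OF bounded_linear_vec_nth])
  moreover have "{u. u $ 2 \<noteq> 0 \<and> (trace (chart_jacobian u) = 0 \<or> det (chart_jacobian u) = 0)} \<subseteq>
      {u \<in> {u. u $ 2 \<noteq> 0}. u $ 8 = tr0 u} \<union>
      {u \<in> {u. u $ 2 \<noteq> 0 \<and> det_slope u \<noteq> 0}. u $ 8 = - u $ 2 * det0 u / det_slope u} \<union>
      {u \<in> UNIV. u $ 1 = u $ 1 - det_slope u}"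
    using chart_nonhyperbolic_cases by (auto simp: tr0_def det0_def)
  ultimately show ?thesis
    by (rule negligible_subset [OF negligible_Un [OF negligible_Un]])
qed

lemma differentiable_on_sirs_chart: "sirs_chart differentiable_on {u. u $ 2 \<noteq> 0}"
  unfolding differentiable_on_def
proof
  fix u :: "real^8"
  assume s: "u \<in> {u. u $ 2 \<noteq> 0}"
  show "sirs_chart differentiable (at u within {u. u $ 2 \<noteq> 0})"
    unfolding differentiable_componentwise_cart
  proof
    fix k :: 8
    show "(\<lambda>u. sirs_chart u $ k) differentiable (at u within {u. u $ 2 \<noteq> 0})"
      using s
      by (cases "k = 2"; cases "k = 3";
          simp add: sirs_chart_def Let_def;
          auto intro!: derivative_intros bounded_linear_imp_differentiable [OF bounded_linear_vec_nth])
  qed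
qed

lemma negligible_Omega1: "negligible Omega1"
proof -
  let ?Z = "{u. u $ 2 \<noteq> 0 \<and> (trace (chart_jacobian u) = 0 \<or> det (chart_jacobian u) = 0)}"
  have "Omega1 \<subseteq> sirs_chart ` ?Z"
  proof
    fix p
    assume "p \<in> Omega1"
    then obtain x where p: "p \<in> Omega" and x: "x \<in> D1" "sirs_field p x = 0"
      and J: "det (sirs_jacobian p x) = 0 \<or> trace (sirs_jacobian p x) = 0"
      unfolding Omega1_def nonhyperbolic_rest_point_sirs_iff by auto
    define u where "u = vec_upd (vec_upd p 2 (x$1)) 3 (x$2)"
    have "u $ 2 \<noteq> 0" "sirs_chart u = p" "chart_state u = x"
      using rest_point_in_chart [OF p x] by (simp_all add: u_def)
    with J have "u \<in> ?Z" "p = sirs_chart u"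
      by (auto simp: chart_jacobian_def)
    then show "p \<in> sirs_chart ` ?Z" by blast
  qed
  moreover have "negligible (sirs_chart ` ?Z)"
    by (rule negligible_differentiable_image_negligible [OF order_refl negligible_chart_nonhyperbolic])
       (rule differentiable_on_subset [OF differentiable_on_sirs_chart], blast)
  ultimately show ?thesis
    by (rule negligible_subset [rotated])
qed

lemma Omega1_nonempty: "Omega1 \<noteq> {}"
proof -
  define p :: "real^8" where "p = (\<chi> k. if k = 1 then 1/2 else if k = 2 then 36/5 else if k = 3 then 1/325
     else if k = 4 then 1/2 else if k = 5 then 12 else if k = 6 then 20 else if k = 7 then 10 else 59/65)"
  define x :: "real^2" where "x = (\<chi> k. if k = 1 then 1/2 else 1/5)"
  have "p \<in> Omega"
    by (auto simp: Omega_def p_def)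
  moreover have "x \<in> D1"
    by (simp add: D1_def x_def)
  moreover have "sirs_field p x = 0" "det (sirs_jacobian p x) = 0"
    by (simp_all add: vec_eq_iff forall_2 sirs_field_nth sirs_jacobian_def Let_def det_2 p_def x_def
        power2_eq_square)
  ultimately have "p \<in> Omega1"
    unfolding Omega1_def nonhyperbolic_rest_point_sirs_iff by auto
  then show ?thesis by blast
qed

theorem proposition4p4:
  shows "closedin (top_of_set Omega) Omega1 \<and> Omega1 \<noteq> {} \<and> Omega1 \<in> null_sets lebesgue"
  using closedin_Omega1 Omega1_nonempty negligible_Omega1 by (simp add: negligible_iff_null_sets)

end
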